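(* Let $c>1$ and $p=c/n$. In $G_{n,p}$, any local routing algorithm between two vertices has expected routing complexity $\Omega(n^2)$.
   Context: $G_{n,p}$ is the random graph on $n$ vertices in which each pair of vertices is joined by an open edge independently with probability $p$ (the complete graph with each edge failing with probability $1-p$). A routing algorithm between vertices $u,v$ may probe whether edges are open and outputs an open path from $u$ to $v$ if one exists; it is local if the first edge it probes is adjacent to $u$ and subsequently it probes only edges having an endpoint to which it has already established an open path from $u$. The routing complexity is the number of probes made until a path is found, conditioned on the event that $u$ and $v$ are connected by an open path. *)

theory Defs
  imports "HOL-Probability.Probability"
begin

definition edges :: "nat \<Rightarrow> nat set set" where
  "edges n = {e. e \<subseteq> {..<n} \<and> card e = 2}"

text \<open>A configuration assigns to every edge whether it is open (False off the edge set).
  G(n,p): edges open independently with probability p.\<close>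
definition gnp :: "nat \<Rightarrow> real \<Rightarrow> (nat set \<Rightarrow> bool) pmf" where
  "gnp n p = Pi_pmf (edges n) False (\<lambda>_. bernoulli_pmf p)"

definition open_edges :: "nat \<Rightarrow> (nat set \<Rightarrow> bool) \<Rightarrow> nat set set" where
  "open_edges n \<omega> = {e \<in> edges n. \<omega> e}"

definition conn :: "nat set set \<Rightarrow> nat \<Rightarrow> nat \<Rightarrow> bool" where
  "conn F x y \<longleftrightarrow> (x, y) \<in> {(a, b). {a, b} \<in> F}\<^sup>*"

text \<open>A (deterministic, adaptive) probing strategy chooses the next edge to probe from the
  history of probes so far (probed edges together with their status).\<close>
primrec probes :: "((nat set \<times> bool) list \<Rightarrow> nat set) \<Rightarrow> (nat set \<Rightarrow> bool) \<Rightarrow> nat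
    \<Rightarrow> (nat set \<times> bool) list" where
  "probes alg \<omega> 0 = []"
| "probes alg \<omega> (Suc k) = probes alg \<omega> k @ [(alg (probes alg \<omega> k), \<omega> (alg (probes alg \<omega> k)))]"

definition found_open :: "(nat set \<times> bool) list \<Rightarrow> nat set set" where
  "found_open h = {e. (e, True) \<in> set h}"

text \<open>Local routing algorithm from u to v in G(n,p): every probed edge is an edge of K_n
  having an endpoint to which an open path from u has already been established (so the
  first probe is adjacent to u), and whenever u and v are joined by an open path the
  algorithm eventually establishes an open path from u to v.\<close>
definition local_router ::
    "nat \<Rightarrow> nat \<Rightarrow> nat \<Rightarrow> ((nat set \<times> bool) list \<Rightarrow> nat set) \<Rightarrow> bool" where
  "local_router n u v alg \<longleftrightarrow>
     (\<forall>\<omega> k. alg (probes alg \<omega> k) \<in> edges n \<and>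
             (\<exists>x \<in> alg (probes alg \<omega> k). conn (found_open (probes alg \<omega> k)) u x)) \<and>
     (\<forall>\<omega>. conn (open_edges n \<omega>) u v \<longrightarrow> (\<exists>k. conn (found_open (probes alg \<omega> k)) u v))"

definition route_time ::
    "((nat set \<times> bool) list \<Rightarrow> nat set) \<Rightarrow> nat \<Rightarrow> nat \<Rightarrow> (nat set \<Rightarrow> bool) \<Rightarrow> nat" where
  "route_time alg u v \<omega> = (LEAST k. conn (found_open (probes alg \<omega> k)) u v)"

definition exp_routing_complexity ::
    "nat \<Rightarrow> real \<Rightarrow> nat \<Rightarrow> nat \<Rightarrow> ((nat set \<times> bool) list \<Rightarrow> nat set) \<Rightarrow> real" where
  "exp_routing_complexity n p u v alg =
     measure_pmf.expectation (gnp n p)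
       (\<lambda>\<omega>. real (route_time alg u v \<omega>) * indicator {\<omega>. conn (open_edges n \<omega>) u v} \<omega>)
     / measure_pmf.prob (gnp n p) {\<omega>. conn (open_edges n \<omega>) u v}"

end

theory Submission
  imports Defs "HOL-Combinatorics.Transposition"
begin

text \<open>A local router cannot have found v before some probed edge at v turned out open. Until
  then locality forces every probe at v to join v to u or to an endpoint of an open edge already
  found. Two Wald identities (in expectation, the number of open edges found is p times the number
  of probes, also when counting only edges at v up to the time v is hit) therefore bound the
  probability of hitting v within K probes by p (1 + 2 p K). On the other hand an exploration
  process with an exponential supermartingale shows that the component of u has linear size with
  probability bounded away from 0, so by symmetry P(u ~ v) \<ge> k > 0. With K of order k n^2 / c^2,
  u and v are connected but v is not hit within K probes with probability at least k / 2, so the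
  expected routing complexity is at least of order n^2.\<close>

section \<open>Product Bernoulli expectation\<close>

definition configs :: "'a set \<Rightarrow> ('a \<Rightarrow> bool) set" where
  "configs E = {\<omega>. \<forall>x. x \<notin> E \<longrightarrow> \<not> \<omega> x}"

definition config_weight :: "real \<Rightarrow> 'a set \<Rightarrow> ('a \<Rightarrow> bool) \<Rightarrow> real" where
  "config_weight p E \<omega> = (\<Prod>x\<in>E. if \<omega> x then p else 1 - p)"

definition bern_expect :: "real \<Rightarrow> 'a set \<Rightarrow> (('a \<Rightarrow> bool) \<Rightarrow> real) \<Rightarrow> real" where
  "bern_expect p E f = (\<Sum>\<omega>\<in>configs E. config_weight p E \<omega> * f \<omega>)"

lemma finite_configs: "finite E \<Longrightarrow> finite (configs E)"
proof -
  assume "finite E"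
  moreover have "configs E \<subseteq> (\<lambda>S x. x \<in> S) ` Pow E"
  proof
    fix \<omega> assume "\<omega> \<in> configs E"
    then have "\<omega> = (\<lambda>x. x \<in> {y \<in> E. \<omega> y})" by (auto simp: configs_def)
    then show "\<omega> \<in> (\<lambda>S x. x \<in> S) ` Pow E" by blast
  qed
  ultimately show ?thesis by (meson finite_Pow_iff finite_imageI finite_subset)
qed

lemma config_weight_nonneg: "0 \<le> p \<Longrightarrow> p \<le> 1 \<Longrightarrow> 0 \<le> config_weight p E \<omega>"
  unfolding config_weight_def by (intro prod_nonneg) auto

lemma expectation_Pi_bernoulli:
  assumes "finite E" "0 \<le> p" "p \<le> 1"
  shows "measure_pmf.expectation (Pi_pmf E False (\<lambda>_. bernoulli_pmf p)) f = bern_expect p E f"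
proof -
  let ?M = "Pi_pmf E False (\<lambda>_. bernoulli_pmf p)"
  have "measure_pmf.expectation ?M f = (\<Sum>\<omega>\<in>configs E. f \<omega> * pmf ?M \<omega>)"
    using finite_configs[OF assms(1)] set_Pi_pmf_subset[OF assms(1), of False]
    by (intro integral_measure_pmf_real) (auto simp: configs_def)
  also have "\<dots> = bern_expect p E f"
    unfolding bern_expect_def config_weight_def using assms
    by (intro sum.cong refl) (auto simp: configs_def pmf_Pi' intro!: prod.cong)
  finally show ?thesis .
qed

lemma bern_expect_const:
  assumes "finite E" "0 \<le> p" "p \<le> 1"
  shows "bern_expect p E (\<lambda>_. c) = c"
  using expectation_Pi_bernoulli[OF assms, of "\<lambda>_. c"] by simp

lemma bern_expect_mono:
  assumes "0 \<le> p" "p \<le> 1" "\<And>\<omega>. \<omega> \<in> configs E \<Longrightarrow> f \<omega> \<le> g \<omega>"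
  shows "bern_expect p E f \<le> bern_expect p E g"
  unfolding bern_expect_def using assms
  by (intro sum_mono mult_left_mono config_weight_nonneg) auto

lemma bern_expect_nonneg:
  assumes "0 \<le> p" "p \<le> 1" "\<And>\<omega>. \<omega> \<in> configs E \<Longrightarrow> 0 \<le> f \<omega>"
  shows "0 \<le> bern_expect p E f"
  unfolding bern_expect_def using assms
  by (intro sum_nonneg mult_nonneg_nonneg config_weight_nonneg) auto

lemma bern_expect_add: "bern_expect p E (\<lambda>\<omega>. f \<omega> + g \<omega>) = bern_expect p E f + bern_expect p E g"
  unfolding bern_expect_def by (simp add: distrib_left sum.distrib)

lemma bern_expect_diff: "bern_expect p E (\<lambda>\<omega>. f \<omega> - g \<omega>) = bern_expect p E f - bern_expect p E g"
  unfolding bern_expect_def by (simp add: right_diff_distrib sum_subtractf)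

lemma bern_expect_cmult: "bern_expect p E (\<lambda>\<omega>. a * f \<omega>) = a * bern_expect p E f"
  unfolding bern_expect_def by (simp add: sum_distrib_left mult.left_commute)

lemma sum_eq_by_involution:
  fixes f g :: "'a \<Rightarrow> 'b :: field_char_0"
  assumes "\<And>x. x \<in> A \<Longrightarrow> \<iota> x \<in> A" "\<And>x. x \<in> A \<Longrightarrow> \<iota> (\<iota> x) = x"
    and "\<And>x. x \<in> A \<Longrightarrow> f x + f (\<iota> x) = g x + g (\<iota> x)"
  shows "sum f A = sum g A"
proof -
  have bij: "bij_betw \<iota> A A" by (rule bij_betwI[where g = \<iota>]) (use assms in auto)
  have "2 * sum f A = sum (\<lambda>x. f x + f (\<iota> x)) A"
    using sum.reindex_bij_betw[OF bij, of f] by (simp add: sum.distrib)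
  also have "\<dots> = sum (\<lambda>x. g x + g (\<iota> x)) A" using assms(3) by (rule sum.cong[OF refl])
  also have "\<dots> = 2 * sum g A"
    using sum.reindex_bij_betw[OF bij, of g] by (simp add: sum.distrib)
  finally show ?thesis by simp
qed

type_synonym history = "(nat set \<times> bool) list"

definition probed :: "history \<Rightarrow> nat set set" where
  "probed h = fst ` set h"

lemma length_probes [simp]: "length (probes s \<omega> t) = t"
  by (induction t) auto

lemma take_probes: "i \<le> t \<Longrightarrow> take i (probes s \<omega> t) = probes s \<omega> i"
  by (induction t) (auto simp: le_Suc_eq)

lemma nth_probes: "i < t \<Longrightarrow> probes s \<omega> t ! i = (s (probes s \<omega> i), \<omega> (s (probes s \<omega> i)))"
  by (induction t) (auto simp: nth_append less_Suc_eq)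

lemma probes_consistent: "(e, b) \<in> set (probes s \<omega> t) \<Longrightarrow> \<omega> e = b"
  by (induction t) auto

lemma probes_known: "e \<in> probed (probes s \<omega> t) \<Longrightarrow> ((e, True) \<in> set (probes s \<omega> t)) = \<omega> e"
  unfolding probed_def by (auto dest: probes_consistent) (metis probes_consistent)

lemma probes_cong:
  "(\<And>e. e \<in> probed (probes s \<omega> t) \<Longrightarrow> \<omega>' e = \<omega> e) \<Longrightarrow> probes s \<omega>' t = probes s \<omega> t"
proof (induction t)
  case (Suc t)
  then have "probes s \<omega>' t = probes s \<omega> t" by (auto simp: probed_def)
  moreover have "\<omega>' (s (probes s \<omega> t)) = \<omega> (s (probes s \<omega> t))"
    using Suc.prems by (simp add: probed_def)
  ultimately show ?case by simp
qed simp

lemma probes_edge: "(e, b) \<in> set (probes s \<omega> t) \<Longrightarrow> \<exists>i<t. e = s (probes s \<omega> i)"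
  by (induction t) (auto simp: less_Suc_eq)

lemma probed_probes_subset:
  assumes "\<And>i. s (probes s \<omega> i) \<in> E"
  shows "probed (probes s \<omega> t) \<subseteq> E"
proof
  fix e assume "e \<in> probed (probes s \<omega> t)"
  then obtain b where "(e, b) \<in> set (probes s \<omega> t)" by (auto simp: probed_def)
  then obtain i where "e = s (probes s \<omega> i)" using probes_edge by blast
  then show "e \<in> E" using assms by simp
qed

lemma finite_probed [simp]: "finite (probed h)"
  by (simp add: probed_def)

lemma card_probed_le: "card (probed h) \<le> length h"
  unfolding probed_def by (metis card_image_le card_length finite_set le_trans)

lemma probed_snoc [simp]: "probed (h @ [(e, b)]) = insert e (probed h)"
  by (auto simp: probed_def)

lemma found_open_subset_probed: "found_open h \<subseteq> probed h"
  by (force simp: found_open_def probed_def)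

lemma finite_found_open [simp]: "finite (found_open h)"
  using finite_subset[OF found_open_subset_probed] by simp

lemma found_open_snoc [simp]:
  "found_open (h @ [(e, b)]) = (if b then insert e (found_open h) else found_open h)"
  by (auto simp: found_open_def)

lemma found_open_snoc_known: "found_open (h @ [(e, (e, True) \<in> set h)]) = found_open h"
  by (auto simp: found_open_def)

lemma found_open_mono: "set h \<subseteq> set h' \<Longrightarrow> found_open h \<subseteq> found_open h'"
  by (auto simp: found_open_def)

section \<open>Martingales of probing strategies\<close>

text \<open>The conditional expectation of G after the next probe, given the history h: a repeated
  probe reveals nothing new, a fresh edge is open with probability p independently of h.\<close>
definition step_mean :: "real \<Rightarrow> (history \<Rightarrow> nat set) \<Rightarrow> (history \<Rightarrow> real) \<Rightarrow> history \<Rightarrow> real" where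
  "step_mean p s G h =
     (if s h \<in> probed h then G (h @ [(s h, (s h, True) \<in> set h)])
      else p * G (h @ [(s h, True)]) + (1 - p) * G (h @ [(s h, False)]))"

definition flip_next :: "(history \<Rightarrow> nat set) \<Rightarrow> nat \<Rightarrow> (nat set \<Rightarrow> bool) \<Rightarrow> nat set \<Rightarrow> bool" where
  "flip_next s t \<omega> =
     (let e = s (probes s \<omega> t) in if e \<in> probed (probes s \<omega> t) then \<omega> else fun_upd \<omega> e (\<not> \<omega> e))"

lemma probes_flip_next: "probes s (flip_next s t \<omega>) t = probes s \<omega> t"
  by (rule probes_cong) (auto simp: flip_next_def Let_def)

lemma flip_next_flip_next: "flip_next s t (flip_next s t \<omega>) = \<omega>"
  by (auto simp: flip_next_def [of s t "flip_next s t \<omega>"] probes_flip_next)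
     (auto simp: flip_next_def Let_def)

lemma flip_next_configs:
  "\<omega> \<in> configs E \<Longrightarrow> s (probes s \<omega> t) \<in> E \<Longrightarrow> flip_next s t \<omega> \<in> configs E"
  by (auto simp: flip_next_def Let_def configs_def)

lemma config_weight_split:
  "finite E \<Longrightarrow> e \<in> E \<Longrightarrow>
   config_weight p E \<omega> = (if \<omega> e then p else 1 - p) * (\<Prod>x\<in>E - {e}. if \<omega> x then p else 1 - p)"
  unfolding config_weight_def by (simp add: prod.remove)

text \<open>Pair each configuration with the one in which the next probed edge, if fresh, has the
  opposite status: both have the same history up to time t, and the two sides agree on each pair.\<close>
lemma bern_expect_probes_Suc:
  assumes "finite E" and "\<And>\<omega>. \<omega> \<in> configs E \<Longrightarrow> s (probes s \<omega> t) \<in> E"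
  shows "bern_expect p E (\<lambda>\<omega>. G (probes s \<omega> (Suc t)))
       = bern_expect p E (\<lambda>\<omega>. step_mean p s G (probes s \<omega> t))"
  unfolding bern_expect_def
proof (rule sum_eq_by_involution[where \<iota> = "flip_next s t"])
  fix \<omega> assume \<omega>: "\<omega> \<in> configs E"
  show "flip_next s t \<omega> \<in> configs E" using \<omega> assms(2)[OF \<omega>] by (rule flip_next_configs)
  show "flip_next s t (flip_next s t \<omega>) = \<omega>" by (rule flip_next_flip_next)
  define h where "h = probes s \<omega> t"
  define e where "e = s h"
  let ?\<omega>' = "flip_next s t \<omega>"
  have h': "probes s ?\<omega>' t = h" by (simp add: probes_flip_next h_def)
  show "config_weight p E \<omega> * G (probes s \<omega> (Suc t))
        + config_weight p E ?\<omega>' * G (probes s ?\<omega>' (Suc t))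
      = config_weight p E \<omega> * step_mean p s G (probes s \<omega> t)
        + config_weight p E ?\<omega>' * step_mean p s G (probes s ?\<omega>' t)"
  proof (cases "e \<in> probed h")
    case True
    then have "?\<omega>' = \<omega>" by (simp add: flip_next_def Let_def h_def e_def)
    then show ?thesis
      using True probes_known[of e s \<omega> t] by (simp add: step_mean_def h_def e_def)
  next
    case False
    have flip: "?\<omega>' = fun_upd \<omega> e (\<not> \<omega> e)"
      using False by (simp add: flip_next_def Let_def h_def e_def)
    have eE: "e \<in> E" using assms(2)[OF \<omega>] by (simp add: h_def e_def)
    define W where "W = (\<Prod>x\<in>E - {e}. if \<omega> x then p else 1 - p)"
    have "(\<Prod>x\<in>E - {e}. if ?\<omega>' x then p else 1 - p) = W"
      unfolding W_def flip by (intro prod.cong) auto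
    then have w': "config_weight p E ?\<omega>' = (if \<omega> e then 1 - p else p) * W"
      using config_weight_split[OF assms(1) eE, of p ?\<omega>'] by (simp add: flip)
    have w: "config_weight p E \<omega> = (if \<omega> e then p else 1 - p) * W"
      using config_weight_split[OF assms(1) eE] by (simp add: W_def)
    have L: "probes s \<omega> (Suc t) = h @ [(e, \<omega> e)]" by (simp add: h_def e_def)
    have L': "probes s ?\<omega>' (Suc t) = h @ [(e, \<not> \<omega> e)]" using h' by (simp add: flip e_def)
    have R: "step_mean p s G h = p * G (h @ [(e, True)]) + (1 - p) * G (h @ [(e, False)])"
      using False by (simp add: step_mean_def e_def)
    show ?thesis
      unfolding L L' h_def[symmetric] h' R w w' by (cases "\<omega> e") (simp_all add: algebra_simps)
  qed
qed

lemma bern_expect_probes_le: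
  assumes fin: "finite E" and p: "0 \<le> p" "p \<le> 1"
    and inE: "\<And>\<omega> t. \<omega> \<in> configs E \<Longrightarrow> s (probes s \<omega> t) \<in> E"
    and super: "\<And>\<omega> t. \<omega> \<in> configs E \<Longrightarrow> step_mean p s G (probes s \<omega> t) \<le> G (probes s \<omega> t)"
  shows "bern_expect p E (\<lambda>\<omega>. G (probes s \<omega> t)) \<le> G []"
proof (induction t)
  case 0
  show ?case using bern_expect_const[OF fin p] by simp
next
  case (Suc t)
  have "bern_expect p E (\<lambda>\<omega>. G (probes s \<omega> (Suc t)))
      = bern_expect p E (\<lambda>\<omega>. step_mean p s G (probes s \<omega> t))"
    using fin inE by (rule bern_expect_probes_Suc)
  also have "\<dots> \<le> bern_expect p E (\<lambda>\<omega>. G (probes s \<omega> t))"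
    using p super by (rule bern_expect_mono)
  finally show ?case using Suc.IH by simp
qed

lemma bern_expect_probes_eq:
  assumes fin: "finite E" and p: "0 \<le> p" "p \<le> 1"
    and inE: "\<And>\<omega> t. \<omega> \<in> configs E \<Longrightarrow> s (probes s \<omega> t) \<in> E"
    and mart: "\<And>h. step_mean p s G h = G h"
  shows "bern_expect p E (\<lambda>\<omega>. G (probes s \<omega> t)) = G []"
proof -
  have "step_mean p s (\<lambda>h. - G h) h = - G h" for h
    using mart[of h] by (simp add: step_mean_def split: if_splits)
  then have "bern_expect p E (\<lambda>\<omega>. - G (probes s \<omega> t)) \<le> - G []"
    by (intro bern_expect_probes_le[where G = "\<lambda>h. - G h"]) (simp_all add: fin p inE)
  moreover have "bern_expect p E (\<lambda>\<omega>. G (probes s \<omega> t)) \<le> G []"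
    by (intro bern_expect_probes_le[where G = G]) (simp_all add: fin p inE mart)
  ultimately show ?thesis
    using bern_expect_cmult[of p E "-1" "\<lambda>\<omega>. G (probes s \<omega> t)"] by simp
qed

definition surplus :: "real \<Rightarrow> (nat set \<Rightarrow> bool) \<Rightarrow> history \<Rightarrow> real" where
  "surplus p P h = real (card {e \<in> found_open h. P e}) - p * real (card {e \<in> probed h. P e})"

lemma step_mean_surplus: "step_mean p s (surplus p P) h = surplus p P h"
proof (cases "s h \<in> probed h")
  case True
  then show ?thesis
    by (simp add: step_mean_def surplus_def found_open_snoc_known insert_absorb
        del: found_open_snoc)
next
  case False
  then have "s h \<notin> found_open h" using found_open_subset_probed by blast
  moreover have "{e. (e = s h \<or> e \<in> A) \<and> P e}
      = (if P (s h) then insert (s h) {e \<in> A. P e} else {e \<in> A. P e})" for A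
    by auto
  ultimately show ?thesis
    using False by (simp add: step_mean_def surplus_def algebra_simps)
qed

definition hits :: "nat \<Rightarrow> history \<Rightarrow> bool" where
  "hits v h \<longleftrightarrow> (\<exists>e \<in> found_open h. v \<in> e)"

fun stop_at :: "nat \<Rightarrow> history \<Rightarrow> history" where
  "stop_at v [] = []"
| "stop_at v (x # h) = (if snd x \<and> v \<in> fst x then [x] else x # stop_at v h)"

lemma not_hits_Nil [simp]: "\<not> hits v []"
  by (simp add: hits_def found_open_def)

lemma hits_Cons: "hits v (x # h) \<longleftrightarrow> (snd x \<and> v \<in> fst x) \<or> hits v h"
  by (cases x) (auto simp: hits_def found_open_def)

lemma stop_at_id: "\<not> hits v h \<Longrightarrow> stop_at v h = h"
  by (induction h) (auto simp: hits_Cons)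

lemma stop_at_snoc: "stop_at v (h @ [x]) = (if hits v h then stop_at v h else h @ [x])"
  by (induction h) (auto simp: hits_Cons stop_at_id)

lemma hits_stop_at: "hits v h \<Longrightarrow> hits v (stop_at v h)"
  by (induction h) (auto simp: hits_Cons)

lemma stop_at_mem: "x \<in> set (stop_at v h) \<Longrightarrow> \<exists>i < length h. h ! i = x \<and> \<not> hits v (take i h)"
proof (induction h)
  case (Cons y h)
  show ?case
  proof (cases "x = y")
    case False
    with Cons obtain i where "i < length h" "h ! i = x" "\<not> hits v (take i h)"
      by (auto split: if_splits)
    with False Cons.prems show ?thesis
      by (intro exI[of _ "Suc i"]) (auto simp: hits_Cons split: if_splits)
  qed (auto simp: hits_def found_open_def)
qed simp

lemma step_mean_stop_at:
  assumes "\<And>h. step_mean p s G h = G h"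
  shows "step_mean p s (\<lambda>h. G (stop_at v h)) h = G (stop_at v h)"
proof (cases "hits v h")
  case True
  then show ?thesis by (simp add: step_mean_def stop_at_snoc algebra_simps)
next
  case False
  then have "step_mean p s (\<lambda>h. G (stop_at v h)) h = step_mean p s G h"
    by (simp add: step_mean_def stop_at_snoc)
  then show ?thesis using assms[of h] False by (simp add: stop_at_id)
qed

lemma bern_expect_card_found_open:
  assumes fin: "finite E" and p: "0 \<le> p" "p \<le> 1"
    and inE: "\<And>\<omega> t. \<omega> \<in> configs E \<Longrightarrow> s (probes s \<omega> t) \<in> E"
    and mart: "\<And>h. step_mean p s (\<lambda>h. surplus p P (g h)) h = surplus p P (g h)" and "g [] = []"
  shows "bern_expect p E (\<lambda>\<omega>. real (card {e \<in> found_open (g (probes s \<omega> t)). P e}))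
       = p * bern_expect p E (\<lambda>\<omega>. real (card {e \<in> probed (g (probes s \<omega> t)). P e}))"
proof -
  have "bern_expect p E (\<lambda>\<omega>. surplus p P (g (probes s \<omega> t))) = surplus p P (g [])"
    using fin p inE mart by (rule bern_expect_probes_eq)
  then show ?thesis
    using \<open>g [] = []\<close>
    by (simp add: surplus_def bern_expect_diff bern_expect_cmult found_open_def probed_def)
qed

lemma finite_edges: "finite (edges n)"
  by (rule finite_subset[of _ "Pow {..<n}"]) (auto simp: edges_def)

lemma card_Union_edges_le: "F \<subseteq> edges n \<Longrightarrow> card (\<Union> F) \<le> 2 * card F"
proof -
  assume F: "F \<subseteq> edges n"
  have "card (\<Union> F) \<le> sum card F" by (rule card_Union_le_sum_card)
  also have "\<dots> = 2 * card F" using F by (simp add: edges_def subset_iff)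
  finally show ?thesis .
qed

lemma conn_refl: "conn F u u"
  by (simp add: conn_def)

lemma conn_edge: "conn F u a \<Longrightarrow> {a, b} \<in> F \<Longrightarrow> conn F u b"
  unfolding conn_def by (rule rtrancl_into_rtrancl) auto

lemma conn_cases: "conn F u x \<Longrightarrow> x = u \<or> (\<exists>f \<in> F. x \<in> f)"
  unfolding conn_def by (induction rule: rtrancl_induct) auto

lemma conn_mono: "F \<subseteq> F' \<Longrightarrow> conn F a b \<Longrightarrow> conn F' a b"
  unfolding conn_def by (erule rtrancl_mono[THEN subsetD, rotated]) auto

section \<open>Hitting v with a local router\<close>

lemma local_router_probed:
  "local_router n u v alg \<Longrightarrow> probed (probes alg \<omega> K) \<subseteq> edges n"
  by (rule probed_probes_subset) (simp add: local_router_def)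

lemma local_probe_before_hit:
  assumes lr: "local_router n u v alg" and "u \<noteq> v"
    and "\<not> hits v (probes alg \<omega> i)" and "v \<in> alg (probes alg \<omega> i)"
  shows "\<exists>x \<in> insert u (\<Union> (found_open (probes alg \<omega> i))). alg (probes alg \<omega> i) = {x, v}"
proof -
  obtain x where x: "x \<in> alg (probes alg \<omega> i)" and cx: "conn (found_open (probes alg \<omega> i)) u x"
    and e: "alg (probes alg \<omega> i) \<in> edges n"
    using lr unfolding local_router_def by blast
  have "x = u \<or> (\<exists>f \<in> found_open (probes alg \<omega> i). x \<in> f)" using cx by (rule conn_cases)
  then have x_known: "x \<in> insert u (\<Union> (found_open (probes alg \<omega> i)))" by blast
  have "x \<noteq> v"
  proof
    assume "x = v"
    with \<open>x = u \<or> _\<close> \<open>u \<noteq> v\<close> have "hits v (probes alg \<omega> i)" by (simp add: hits_def)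
    with assms(3) show False ..
  qed
  moreover obtain a b where "alg (probes alg \<omega> i) = {a, b}" "a \<noteq> b"
    using e by (auto simp: edges_def card_2_iff)
  ultimately have "alg (probes alg \<omega> i) = {x, v}" using x assms(4) by auto
  with x_known show ?thesis ..
qed

lemma card_probed_at_before_hit:
  assumes lr: "local_router n u v alg" and uv: "u \<noteq> v"
  shows "card {e \<in> probed (stop_at v (probes alg \<omega> K)). v \<in> e}
         \<le> 1 + 2 * card (found_open (probes alg \<omega> K))"
proof -
  let ?H = "probes alg \<omega> K"
  let ?X = "insert u (\<Union> (found_open ?H))"
  have "{e \<in> probed (stop_at v ?H). v \<in> e} \<subseteq> (\<lambda>x. {x, v}) ` ?X"
  proof
    fix e assume "e \<in> {e \<in> probed (stop_at v ?H). v \<in> e}"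
    then obtain b where "(e, b) \<in> set (stop_at v ?H)" and v: "v \<in> e"
      by (auto simp: probed_def)
    then obtain i where i: "i < K" "?H ! i = (e, b)" "\<not> hits v (take i ?H)"
      using stop_at_mem by fastforce
    then have e: "e = alg (probes alg \<omega> i)" and nh: "\<not> hits v (probes alg \<omega> i)"
      using nth_probes[OF i(1)] take_probes[of i K] by auto
    have "found_open (probes alg \<omega> i) \<subseteq> found_open ?H"
      using take_probes[of i K alg \<omega>] i(1) by (metis found_open_mono less_imp_le set_take_subset)
    then show "e \<in> (\<lambda>x. {x, v}) ` ?X"
      using local_probe_before_hit[OF lr uv nh] v e by blast
  qed
  moreover have "finite ?X"
  proof -
    have "found_open ?H \<subseteq> edges n"
      using found_open_subset_probed local_router_probed[OF lr] by (rule order_trans)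
    then have "\<Union> (found_open ?H) \<subseteq> {..<n}" by (auto simp: edges_def)
    then show ?thesis using finite_subset by auto
  qed
  ultimately have "card {e \<in> probed (stop_at v ?H). v \<in> e} \<le> card ?X"
    by (meson card_image_le card_mono finite_imageI order_trans)
  also have "\<dots> \<le> 1 + card (\<Union> (found_open ?H))" using \<open>finite ?X\<close> by (simp add: card_insert_if)
  also have "\<dots> \<le> 1 + 2 * card (found_open ?H)"
    using card_Union_edges_le found_open_subset_probed local_router_probed[OF lr]
    by (meson add_left_mono order_trans)
  finally show ?thesis .
qed

lemma prob_hits_le:
  assumes lr: "local_router n u v alg" and uv: "u \<noteq> v" and p: "0 \<le> p" "p \<le> 1"
  shows "bern_expect p (edges n) (\<lambda>\<omega>. of_bool (hits v (probes alg \<omega> K))) \<le> p * (1 + 2 * p * K)"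
proof -
  let ?E = "edges n" and ?H = "\<lambda>\<omega>. probes alg \<omega> K"
  have fin: "finite ?E" by (rule finite_edges)
  have inE: "alg (probes alg \<omega> t) \<in> ?E" for \<omega> t using lr by (simp add: local_router_def)
  have wald_at_v:
    "bern_expect p ?E (\<lambda>\<omega>. real (card {e \<in> found_open (stop_at v (?H \<omega>)). v \<in> e}))
     = p * bern_expect p ?E (\<lambda>\<omega>. real (card {e \<in> probed (stop_at v (?H \<omega>)). v \<in> e}))"
    by (rule bern_expect_card_found_open)
      (simp_all add: fin p inE step_mean_stop_at step_mean_surplus)
  have "bern_expect p ?E (\<lambda>\<omega>. real (card {e \<in> found_open (?H \<omega>). True}))
     = p * bern_expect p ?E (\<lambda>\<omega>. real (card {e \<in> probed (?H \<omega>). True}))"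
    by (rule bern_expect_card_found_open[where g = "\<lambda>h. h"])
      (simp_all add: fin p inE step_mean_surplus)
  then have wald: "bern_expect p ?E (\<lambda>\<omega>. real (card (found_open (?H \<omega>))))
     = p * bern_expect p ?E (\<lambda>\<omega>. real (card (probed (?H \<omega>))))"
    by simp
  have "bern_expect p ?E (\<lambda>\<omega>. of_bool (hits v (?H \<omega>)))
      \<le> bern_expect p ?E (\<lambda>\<omega>. real (card {e \<in> found_open (stop_at v (?H \<omega>)). v \<in> e}))"
  proof (rule bern_expect_mono[OF p])
    fix \<omega>
    show "of_bool (hits v (?H \<omega>)) \<le> real (card {e \<in> found_open (stop_at v (?H \<omega>)). v \<in> e})"
      using hits_stop_at[of v "?H \<omega>"] by (auto simp: hits_def Suc_le_eq card_gt_0_iff)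
  qed
  also have "\<dots> = p * bern_expect p ?E (\<lambda>\<omega>. real (card {e \<in> probed (stop_at v (?H \<omega>)). v \<in> e}))"
    by (rule wald_at_v)
  also have "\<dots> \<le> p * bern_expect p ?E (\<lambda>\<omega>. 1 + 2 * real (card (found_open (?H \<omega>))))"
  proof (intro mult_left_mono bern_expect_mono p)
    fix \<omega>
    show "real (card {e \<in> probed (stop_at v (?H \<omega>)). v \<in> e})
        \<le> 1 + 2 * real (card (found_open (?H \<omega>)))"
      using card_probed_at_before_hit[OF lr uv, of \<omega> K] by linarith
  qed
  also have "\<dots> = p * (1 + 2 * (p * bern_expect p ?E (\<lambda>\<omega>. real (card (probed (?H \<omega>))))))"
    by (simp add: bern_expect_add bern_expect_cmult bern_expect_const[OF fin p] wald)
  also have "\<dots> \<le> p * (1 + 2 * (p * bern_expect p ?E (\<lambda>_. real K)))"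
    using card_probed_le[of "?H _"] p
    by (intro mult_left_mono add_left_mono bern_expect_mono) auto
  finally show ?thesis by (simp add: bern_expect_const[OF fin p] mult.assoc)
qed

section \<open>Exploring the component of u\<close>

definition reached :: "nat \<Rightarrow> nat \<Rightarrow> history \<Rightarrow> nat set" where
  "reached n u h = {w. w < n \<and> conn (found_open h) u w}"

definition boundary :: "nat \<Rightarrow> nat \<Rightarrow> history \<Rightarrow> nat set set" where
  "boundary n u h = {e \<in> edges n. e \<notin> probed h \<and>
     (\<exists>a b. e = {a, b} \<and> a \<in> reached n u h \<and> b < n \<and> b \<notin> reached n u h)}"

text \<open>Once the boundary is empty the search repeats its first probe, which reveals nothing;
  the value on the empty history is irrelevant as long as the initial boundary is nonempty.\<close>
definition explore :: "nat \<Rightarrow> nat \<Rightarrow> history \<Rightarrow> nat set" where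
  "explore n u h = (if boundary n u h \<noteq> {} then (SOME e. e \<in> boundary n u h)
                    else if h = [] then {0, 1} else fst (hd h))"

definition exp_potential :: "real \<Rightarrow> real \<Rightarrow> nat \<Rightarrow> nat \<Rightarrow> history \<Rightarrow> real" where
  "exp_potential \<theta> \<kappa> n u h = exp (- \<theta> * card (reached n u h) + \<kappa> * card (probed h))"

lemma reached_subset: "reached n u h \<subseteq> {..<n}"
  by (auto simp: reached_def)

lemma finite_reached: "finite (reached n u h)"
  using finite_subset[OF reached_subset] by simp

lemma reached_Nil: "u < n \<Longrightarrow> reached n u [] = {u}"
  using conn_cases[of "{}" u] by (auto simp: reached_def found_open_def conn_refl)

lemma boundary_Nil_nonempty:
  assumes "u < n" "2 \<le> n"
  shows "boundary n u [] \<noteq> {}"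
proof -
  define b where "b = (if u = 0 then 1 else (0::nat))"
  have b: "b < n" "b \<noteq> u" using assms by (auto simp: b_def)
  then have "{u, b} \<in> boundary n u []"
    using assms by (auto simp: boundary_def edges_def reached_Nil probed_def)
  then show ?thesis by blast
qed

lemma explore_in_boundary: "boundary n u h \<noteq> {} \<Longrightarrow> explore n u h \<in> boundary n u h"
  unfolding explore_def by (simp add: some_in_eq)

lemma explore_cases:
  assumes "boundary n u [] \<noteq> {}"
  shows "explore n u h \<in> boundary n u h \<or> explore n u h \<in> probed h"
proof (cases "boundary n u h = {}")
  case True
  with assms have "h \<noteq> []" by auto
  with True show ?thesis by (simp add: explore_def probed_def)
qed (simp add: explore_in_boundary)

lemma explore_in_edges:
  assumes "boundary n u [] \<noteq> {}"
  shows "explore n u (probes (explore n u) \<omega> t) \<in> edges n"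
proof (induction t rule: less_induct)
  case (less t)
  let ?h = "probes (explore n u) \<omega> t"
  consider "explore n u ?h \<in> boundary n u ?h" | "explore n u ?h \<in> probed ?h"
    using explore_cases[OF assms] by blast
  then show ?case
  proof cases
    case 2
    then obtain b where "(explore n u ?h, b) \<in> set ?h" by (auto simp: probed_def)
    then obtain i where "i < t" "explore n u ?h = explore n u (probes (explore n u) \<omega> i)"
      using probes_edge by blast
    then show ?thesis using less.IH by simp
  qed (simp add: boundary_def)
qed

text \<open>A fresh boundary edge that turns out open adds a new vertex to the reached set, so
  the choice of \<kappa> makes the potential a supermartingale.\<close>
lemma step_mean_exp_potential_le:
  assumes "boundary n u [] \<noteq> {}" and p: "0 \<le> p" "p \<le> 1" and "0 \<le> \<theta>"
    and \<kappa>: "exp \<kappa> * (1 - p + p * exp (- \<theta>)) = 1"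
  shows "step_mean p (explore n u) (exp_potential \<theta> \<kappa> n u) h \<le> exp_potential \<theta> \<kappa> n u h"
proof (cases "explore n u h \<in> probed h")
  case True
  then show ?thesis
    by (simp add: step_mean_def exp_potential_def reached_def found_open_snoc_known insert_absorb
        del: found_open_snoc)
next
  case False
  define e where "e = explore n u h"
  have "e \<in> boundary n u h" using explore_cases[OF assms(1), of h] False by (simp add: e_def)
  then obtain a b where ab: "e = {a, b}" "a \<in> reached n u h" "b < n" "b \<notin> reached n u h"
    by (auto simp: boundary_def)
  define r where "r = card (reached n u h)"
  define k where "k = card (probed h)"
  have probed_next: "card (probed (h @ [(e, x)])) = Suc k" for x
    using False by (simp add: k_def e_def)
  have sub: "found_open h \<subseteq> found_open (h @ [(e, True)])" by auto
  have "conn (found_open (h @ [(e, True)])) u b"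
    using conn_mono[OF sub] ab(2) by (intro conn_edge[of _ u a b]) (auto simp: reached_def ab(1))
  then have "insert b (reached n u h) \<subseteq> reached n u (h @ [(e, True)])"
    using conn_mono[OF sub] ab(3) by (auto simp: reached_def)
  then have "card (insert b (reached n u h)) \<le> card (reached n u (h @ [(e, True)]))"
    by (rule card_mono[OF finite_reached])
  then have "Suc r \<le> card (reached n u (h @ [(e, True)]))"
    using ab(4) finite_reached by (simp add: r_def)
  then have "exp_potential \<theta> \<kappa> n u (h @ [(e, True)]) \<le> exp (- \<theta> * (r + 1) + \<kappa> * (k + 1))"
    unfolding exp_potential_def probed_next using \<open>0 \<le> \<theta>\<close> by (simp add: mult_left_mono)
  moreover have "exp_potential \<theta> \<kappa> n u (h @ [(e, False)]) = exp (- \<theta> * r + \<kappa> * (k + 1))"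
    unfolding exp_potential_def probed_next by (simp add: reached_def r_def)
  ultimately have "step_mean p (explore n u) (exp_potential \<theta> \<kappa> n u) h
      \<le> p * exp (- \<theta> * (r + 1) + \<kappa> * (k + 1)) + (1 - p) * exp (- \<theta> * r + \<kappa> * (k + 1))"
    using False p by (simp add: step_mean_def e_def[symmetric] mult_left_mono)
  also have "\<dots> = exp (- \<theta> * r + \<kappa> * k) * (exp \<kappa> * (1 - p + p * exp (- \<theta>)))"
    by (simp add: algebra_simps flip: exp_add)
  also have "\<dots> = exp_potential \<theta> \<kappa> n u h" using \<kappa> by (simp add: exp_potential_def r_def k_def)
  finally show ?thesis .
qed

definition component :: "nat \<Rightarrow> (nat set \<Rightarrow> bool) \<Rightarrow> nat \<Rightarrow> nat set" where
  "component n \<omega> u = {w. w < n \<and> conn (open_edges n \<omega>) u w}"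

lemma finite_component: "finite (component n \<omega> u)"
  by (rule finite_subset[of _ "{..<n}"]) (auto simp: component_def)

lemma card_reached_mult_le:
  assumes "boundary n u h = {}"
  shows "card (reached n u h) * (n - card (reached n u h)) \<le> card (probed h)"
proof -
  let ?R = "reached n u h"
  let ?f = "\<lambda>(a, b). {a, b} :: nat set"
  have "?f ` (?R \<times> ({..<n} - ?R)) \<subseteq> probed h"
  proof
    fix e assume "e \<in> ?f ` (?R \<times> ({..<n} - ?R))"
    then obtain a b where ab: "a \<in> ?R" "b < n" "b \<notin> ?R" "e = {a, b}" by auto
    moreover from ab have "a \<noteq> b" by blast
    ultimately have "e \<in> edges n" using reached_subset by (auto simp: edges_def)
    with ab assms show "e \<in> probed h" unfolding boundary_def by blast
  qed
  moreover have "inj_on ?f (?R \<times> ({..<n} - ?R))"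
    by (rule inj_onI) (auto simp: doubleton_eq_iff)
  ultimately have "card (?R \<times> ({..<n} - ?R)) \<le> card (probed h)"
    by (metis card_image card_mono finite_probed)
  then show ?thesis
    using reached_subset finite_reached by (simp add: card_cartesian_product card_Diff_subset)
qed

lemma boundary_empty_stays:
  assumes "boundary n u [] \<noteq> {}" and empty: "boundary n u (probes (explore n u) \<omega> t) = {}"
  shows "boundary n u (probes (explore n u) \<omega> (Suc t)) = {}"
proof -
  let ?h = "probes (explore n u) \<omega> t"
  let ?e = "explore n u ?h"
  have "?h \<noteq> []" using assms by auto
  then have "?e \<in> probed ?h" using empty by (simp add: explore_def probed_def)
  then have "probes (explore n u) \<omega> (Suc t) = ?h @ [(?e, (?e, True) \<in> set ?h)]"
    using probes_known[of ?e "explore n u" \<omega> t] by simp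
  then have "found_open (probes (explore n u) \<omega> (Suc t)) = found_open ?h"
    and "probed (probes (explore n u) \<omega> (Suc t)) = probed ?h"
    using \<open>?e \<in> probed ?h\<close>
    by (simp_all add: found_open_snoc_known insert_absorb del: found_open_snoc)
  then show ?thesis using empty by (simp add: boundary_def reached_def)
qed

lemma card_probed_explore:
  assumes "boundary n u [] \<noteq> {}"
  shows "boundary n u (probes (explore n u) \<omega> t) \<noteq> {} \<Longrightarrow>
         card (probed (probes (explore n u) \<omega> t)) = t"
proof (induction t)
  case (Suc t)
  then have nonempty: "boundary n u (probes (explore n u) \<omega> t) \<noteq> {}"
    using boundary_empty_stays[OF assms] by blast
  then have "explore n u (probes (explore n u) \<omega> t) \<notin> probed (probes (explore n u) \<omega> t)"
    using explore_in_boundary by (simp add: boundary_def)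
  then show ?case using Suc.IH[OF nonempty] by simp
qed (simp add: probed_def)

lemma boundary_eventually_empty:
  assumes "boundary n u [] \<noteq> {}"
  shows "boundary n u (probes (explore n u) \<omega> (Suc (card (edges n)))) = {}"
proof (rule ccontr)
  let ?h = "probes (explore n u) \<omega> (Suc (card (edges n)))"
  assume "boundary n u ?h \<noteq> {}"
  then have "card (probed ?h) = Suc (card (edges n))" by (rule card_probed_explore[OF assms])
  moreover have "probed ?h \<subseteq> edges n"
    using explore_in_edges[OF assms] by (rule probed_probes_subset)
  then have "card (probed ?h) \<le> card (edges n)" by (rule card_mono[OF finite_edges])
  ultimately show False by linarith
qed

lemma reached_explore_subset_component:
  assumes "boundary n u [] \<noteq> {}"
  shows "reached n u (probes (explore n u) \<omega> t) \<subseteq> component n \<omega> u"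
proof -
  have "found_open (probes (explore n u) \<omega> t) \<subseteq> open_edges n \<omega>"
  proof
    fix e assume "e \<in> found_open (probes (explore n u) \<omega> t)"
    then have e: "(e, True) \<in> set (probes (explore n u) \<omega> t)" by (simp add: found_open_def)
    then obtain i where "e = explore n u (probes (explore n u) \<omega> i)" using probes_edge by blast
    then show "e \<in> open_edges n \<omega>"
      using explore_in_edges[OF assms] probes_consistent[OF e] by (simp add: open_edges_def)
  qed
  from conn_mono[OF this] show ?thesis by (auto simp: reached_def component_def)
qed

text \<open>After exhausting the boundary the search has probed every pair joining the r reached
  vertices to the n - r others, so the potential is at least exp (r (\<kappa> (n - r) - \<theta>)).\<close>
lemma exp_potential_explored_ge_one:
  assumes "u < n" "2 \<le> n" "0 \<le> \<kappa>"
    and small: "\<And>r::nat. 1 \<le> r \<Longrightarrow> real r < m \<Longrightarrow> \<theta> \<le> \<kappa> * (real n - real r)"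
    and "real (card (component n \<omega> u)) < m"
  shows "1 \<le> exp_potential \<theta> \<kappa> n u (probes (explore n u) \<omega> (Suc (card (edges n))))"
proof -
  have start: "boundary n u [] \<noteq> {}" using assms(1,2) by (rule boundary_Nil_nonempty)
  let ?h = "probes (explore n u) \<omega> (Suc (card (edges n)))"
  let ?r = "card (reached n u ?h)"
  have "?r \<le> card (component n \<omega> u)"
    by (rule card_mono[OF finite_component reached_explore_subset_component[OF start]])
  then have "real ?r < m" using assms(5) by linarith
  moreover have "1 \<le> ?r"
    using assms(1) finite_reached by (auto simp: Suc_le_eq card_gt_0_iff reached_def conn_refl)
  ultimately have "\<theta> \<le> \<kappa> * (real n - real ?r)" by (rule small[rotated])
  have "?r \<le> n" using card_mono[OF finite_lessThan[of n] reached_subset[of n u ?h]] by simp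
  then have "real ?r * (real n - real ?r) = real (?r * (n - ?r))" by (simp add: of_nat_diff)
  also have "\<dots> \<le> real (card (probed ?h))"
    using card_reached_mult_le[OF boundary_eventually_empty[OF start]] by (simp only: of_nat_le_iff)
  finally have pairs: "real ?r * (real n - real ?r) \<le> real (card (probed ?h))" .
  have "\<theta> * ?r \<le> \<kappa> * (real n - real ?r) * ?r"
    using \<open>\<theta> \<le> _\<close> by (rule mult_right_mono) simp
  also have "\<dots> = \<kappa> * (real ?r * (real n - real ?r))" by (simp add: algebra_simps)
  also have "\<dots> \<le> \<kappa> * card (probed ?h)" using pairs \<open>0 \<le> \<kappa>\<close> by (rule mult_left_mono)
  finally show ?thesis by (simp add: exp_potential_def)
qed

lemma prob_small_component_le:
  assumes "u < n" "2 \<le> n" and p: "0 \<le> p" "p \<le> 1" and "0 \<le> \<theta>" "0 \<le> \<kappa>"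
    and \<kappa>: "exp \<kappa> * (1 - p + p * exp (- \<theta>)) = 1"
    and small: "\<And>r::nat. 1 \<le> r \<Longrightarrow> real r < m \<Longrightarrow> \<theta> \<le> \<kappa> * (real n - real r)"
  shows "bern_expect p (edges n) (\<lambda>\<omega>. of_bool (real (card (component n \<omega> u)) < m)) \<le> exp (- \<theta>)"
proof -
  have start: "boundary n u [] \<noteq> {}" using assms(1,2) by (rule boundary_Nil_nonempty)
  let ?h = "\<lambda>\<omega>. probes (explore n u) \<omega> (Suc (card (edges n)))"
  have "bern_expect p (edges n) (\<lambda>\<omega>. of_bool (real (card (component n \<omega> u)) < m))
      \<le> bern_expect p (edges n) (\<lambda>\<omega>. exp_potential \<theta> \<kappa> n u (?h \<omega>))"
  proof (rule bern_expect_mono[OF p])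
    fix \<omega>
    show "of_bool (real (card (component n \<omega> u)) < m) \<le> exp_potential \<theta> \<kappa> n u (?h \<omega>)"
      using exp_potential_explored_ge_one[OF assms(1,2) \<open>0 \<le> \<kappa>\<close> small, where \<omega> = \<omega>]
      by (cases "real (card (component n \<omega> u)) < m") (simp_all add: exp_potential_def)
  qed
  also have "\<dots> \<le> exp_potential \<theta> \<kappa> n u []"
    by (intro bern_expect_probes_le finite_edges p explore_in_edges[OF start]
        step_mean_exp_potential_le[OF start p \<open>0 \<le> \<theta>\<close> \<kappa>])
  also have "\<dots> = exp (- \<theta>)" using assms(1) by (simp add: exp_potential_def reached_Nil probed_def)
  finally show ?thesis .
qed

section \<open>Symmetry and the connection probability\<close>

lemma bern_expect_sum:
  "bern_expect p E (\<lambda>\<omega>. \<Sum>w\<in>W. f w \<omega>) = (\<Sum>w\<in>W. bern_expect p E (f w))"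
  unfolding bern_expect_def by (simp add: sum_distrib_left sum.swap[of _ W])

lemma bern_expect_reindex:
  assumes "\<And>e. e \<in> E \<Longrightarrow> \<sigma> e \<in> E" and "\<And>e. \<sigma> (\<sigma> e) = e"
  shows "bern_expect p E (\<lambda>\<omega>. f (\<omega> \<circ> \<sigma>)) = bern_expect p E f"
proof -
  have \<sigma>E: "\<sigma> e \<in> E \<longleftrightarrow> e \<in> E" for e
  proof
    assume "\<sigma> e \<in> E"
    then have "\<sigma> (\<sigma> e) \<in> E" by (rule assms(1))
    then show "e \<in> E" by (simp add: assms(2))
  qed (rule assms(1))
  have bij: "bij_betw \<sigma> E E" by (rule bij_betwI[where g = \<sigma>]) (simp_all add: \<sigma>E assms(2))
  have bij_configs: "bij_betw (\<lambda>\<omega>. \<omega> \<circ> \<sigma>) (configs E) (configs E)"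
    by (rule bij_betwI[where g = "\<lambda>\<omega>. \<omega> \<circ> \<sigma>"]) (auto simp: configs_def \<sigma>E assms(2))
  have weight: "config_weight p E (\<omega> \<circ> \<sigma>) = config_weight p E \<omega>" for \<omega>
    using prod.reindex_bij_betw[OF bij, of "\<lambda>e. if \<omega> e then p else 1 - p"]
    by (simp add: config_weight_def)
  have "bern_expect p E (\<lambda>\<omega>. f (\<omega> \<circ> \<sigma>))
      = (\<Sum>\<omega>\<in>configs E. config_weight p E (\<omega> \<circ> \<sigma>) * f (\<omega> \<circ> \<sigma>))"
    by (simp add: bern_expect_def weight)
  also have "\<dots> = bern_expect p E f"
    unfolding bern_expect_def by (rule sum.reindex_bij_betw[OF bij_configs])
  finally show ?thesis .
qed

lemma conn_image: "conn F a b \<Longrightarrow> conn ((`) f ` F) (f a) (f b)"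
  unfolding conn_def
proof (induction rule: rtrancl_induct)
  case (step y z)
  then have "{f y, f z} \<in> (`) f ` F" by (auto intro: rev_image_eqI[of "{y, z}"])
  with step.IH show ?case by (simp add: rtrancl_into_rtrancl)
qed simp

lemma transpose_image_edges:
  assumes "v < n" "w < n" "e \<in> edges n"
  shows "Transposition.transpose v w ` e \<in> edges n"
proof -
  have "card (Transposition.transpose v w ` e) = card e" by (rule card_image) simp
  moreover have "Transposition.transpose v w ` e \<subseteq> {..<n}"
    using assms by (auto simp: edges_def Transposition.transpose_def)
  ultimately show ?thesis using assms(3) by (simp add: edges_def)
qed

lemma prob_conn_transpose:
  assumes "u < n" "v < n" "w < n" "u \<noteq> v" "u \<noteq> w"
  shows "bern_expect p (edges n) (\<lambda>\<omega>. of_bool (conn (open_edges n \<omega>) u v))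
       = bern_expect p (edges n) (\<lambda>\<omega>. of_bool (conn (open_edges n \<omega>) u w))"
proof -
  let ?\<tau> = "Transposition.transpose v w"
  let ?\<sigma> = "(`) ?\<tau>"
  have \<sigma>\<sigma>: "?\<sigma> (?\<sigma> e) = e" for e by (simp add: image_image)
  have \<sigma>E: "?\<sigma> e \<in> edges n \<longleftrightarrow> e \<in> edges n" for e
    using transpose_image_edges[OF assms(2,3)] \<sigma>\<sigma> by metis
  have inv: "?\<sigma> ` (?\<sigma> ` A) = A" for A by (simp add: image_image \<sigma>\<sigma>)
  have "e \<in> open_edges n (\<omega> \<circ> ?\<sigma>) \<longleftrightarrow> e \<in> ?\<sigma> ` open_edges n \<omega>" for e \<omega>
  proof -
    have "e \<in> ?\<sigma> ` open_edges n \<omega> \<longleftrightarrow> ?\<sigma> e \<in> ?\<sigma> ` ?\<sigma> ` open_edges n \<omega>"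
      by (rule inj_image_mem_iff[symmetric]) (metis \<sigma>\<sigma> injI)
    then show ?thesis by (simp add: inv open_edges_def \<sigma>E)
  qed
  then have opn: "open_edges n (\<omega> \<circ> ?\<sigma>) = ?\<sigma> ` open_edges n \<omega>" for \<omega> by blast
  have t: "?\<tau> u = u" "?\<tau> v = w" "?\<tau> w = v" using assms by simp_all
  have "conn (open_edges n (\<omega> \<circ> ?\<sigma>)) u v \<longleftrightarrow> conn (open_edges n \<omega>) u w" for \<omega>
  proof
    assume "conn (open_edges n (\<omega> \<circ> ?\<sigma>)) u v"
    then have "conn (?\<sigma> ` ?\<sigma> ` open_edges n \<omega>) (?\<tau> u) (?\<tau> v)"
      unfolding opn by (rule conn_image)
    then show "conn (open_edges n \<omega>) u w" by (simp only: inv t)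
  next
    assume "conn (open_edges n \<omega>) u w"
    then have "conn (?\<sigma> ` open_edges n \<omega>) (?\<tau> u) (?\<tau> w)"
      by (rule conn_image)
    then show "conn (open_edges n (\<omega> \<circ> ?\<sigma>)) u v" by (simp only: opn t)
  qed
  then show ?thesis
    using bern_expect_reindex[of "edges n" ?\<sigma> p "\<lambda>\<omega>. of_bool (conn (open_edges n \<omega>) u v)"]
    by (simp add: \<sigma>E \<sigma>\<sigma>)
qed

text \<open>By symmetry, (n - 1) P(u ~ v) is the expected number of vertices other than u in the
  component of u.\<close>
lemma prob_conn_ge:
  assumes "u < n" "v < n" "u \<noteq> v" and p: "0 \<le> p" "p \<le> 1" and "1 \<le> m"
    and small: "bern_expect p (edges n) (\<lambda>\<omega>. of_bool (real (card (component n \<omega> u)) < m)) \<le> b"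
  shows "(m - 1) * (1 - b)
         \<le> (real n - 1) * bern_expect p (edges n) (\<lambda>\<omega>. of_bool (conn (open_edges n \<omega>) u v))"
proof -
  let ?E = "edges n" and ?W = "{..<n} - {u}"
  have "(m - 1) * (1 - b)
      \<le> (m - 1) * (1 - bern_expect p ?E (\<lambda>\<omega>. of_bool (real (card (component n \<omega> u)) < m)))"
    using small \<open>1 \<le> m\<close> by (intro mult_left_mono) auto
  also have "\<dots> = bern_expect p ?E (\<lambda>\<omega>. (m - 1) * (1 - of_bool (real (card (component n \<omega> u)) < m)))"
    by (simp add: bern_expect_cmult bern_expect_diff bern_expect_const[OF finite_edges p])
  also have "\<dots> \<le> bern_expect p ?E (\<lambda>\<omega>. \<Sum>w\<in>?W. of_bool (conn (open_edges n \<omega>) u w))"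
  proof (rule bern_expect_mono[OF p])
    fix \<omega>
    have u: "u \<in> component n \<omega> u" using assms(1) by (simp add: component_def conn_refl)
    then have "0 < card (component n \<omega> u)" using finite_component card_gt_0_iff by blast
    then have "real (card (component n \<omega> u)) - 1 = real (card (component n \<omega> u - {u}))"
      using u finite_component by (simp add: card_Diff_singleton of_nat_diff)
    also have "component n \<omega> u - {u} = ?W \<inter> {w. conn (open_edges n \<omega>) u w}"
      by (auto simp: component_def)
    also have "real (card \<dots>) = (\<Sum>w\<in>?W. of_bool (conn (open_edges n \<omega>) u w))"
      by simp
    finally show "(m - 1) * (1 - of_bool (real (card (component n \<omega> u)) < m))
        \<le> (\<Sum>w\<in>?W. of_bool (conn (open_edges n \<omega>) u w))"
      by (cases "real (card (component n \<omega> u)) < m") (auto intro: sum_nonneg)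
  qed
  also have "\<dots> = (\<Sum>w\<in>?W. bern_expect p ?E (\<lambda>\<omega>. of_bool (conn (open_edges n \<omega>) u v)))"
    unfolding bern_expect_sum using assms(1,2,3)
    by (intro sum.cong refl) (auto intro: prob_conn_transpose[symmetric])
  also have "\<dots> = (real n - 1) * bern_expect p ?E (\<lambda>\<omega>. of_bool (conn (open_edges n \<omega>) u v))"
    using assms(1) by (simp add: of_nat_diff)
  finally show ?thesis .
qed

text \<open>The exploration rate: \<kappa> \<ge> p (1 - exp (- \<theta>)) \<ge> p \<theta> / (1 + \<theta>), and n (1 + \<theta>) / c is
  exactly the number of unreached vertices when r = (c - 1) n / (2 c).\<close>
lemma exploration_rate:
  fixes c n :: real
  assumes "1 < c" "c \<le> n"
  defines "\<theta> \<equiv> (c - 1) / 2"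
  defines "\<kappa> \<equiv> - ln (1 - c / n * (1 - exp (- \<theta>)))"
  shows "0 \<le> \<kappa>" and "exp \<kappa> * (1 - c / n + c / n * exp (- \<theta>)) = 1"
    and "\<And>r. r < (c - 1) / (2 * c) * n \<Longrightarrow> \<theta> \<le> \<kappa> * (n - r)"
proof -
  define p where "p = c / n"
  have p: "0 < p" "p \<le> 1" using assms(1,2) by (simp_all add: p_def)
  have \<theta>: "0 < \<theta>" using assms(1) by (simp add: \<theta>_def)
  then have e: "0 < 1 - exp (- \<theta>)" "1 - exp (- \<theta>) < 1" by simp_all
  have "p * (1 - exp (- \<theta>)) < 1"
    using mult_right_mono[OF p(2) less_imp_le[OF e(1)]] e(2) by (metis mult_1 order_le_less_trans)
  then have q: "0 < 1 - p * (1 - exp (- \<theta>))" by simp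
  have "p * (1 - exp (- \<theta>)) \<le> \<kappa>"
    using ln_le_minus_one[OF q] by (simp add: \<kappa>_def p_def)
  moreover have "0 \<le> p * (1 - exp (- \<theta>))" using p e by simp
  ultimately show "0 \<le> \<kappa>" by linarith
  have "exp \<kappa> = inverse (1 - p * (1 - exp (- \<theta>)))"
    using q by (simp add: \<kappa>_def p_def exp_minus)
  moreover have "1 - c / n + c / n * exp (- \<theta>) = 1 - p * (1 - exp (- \<theta>))"
    by (simp add: p_def algebra_simps)
  ultimately show "exp \<kappa> * (1 - c / n + c / n * exp (- \<theta>)) = 1"
    using q by (simp only:) simp
  have "1 + \<theta> \<le> exp \<theta>" by (rule exp_ge_add_one_self)
  then have "\<theta> / (1 + \<theta>) \<le> 1 - exp (- \<theta>)" using \<theta> by (simp add: exp_minus field_simps)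
  with p \<open>p * (1 - exp (- \<theta>)) \<le> \<kappa>\<close> have rate: "p * (\<theta> / (1 + \<theta>)) \<le> \<kappa>"
    by (meson mult_left_mono less_imp_le order_trans)
  fix r assume r: "r < (c - 1) / (2 * c) * n"
  have n: "0 < n" using assms(1,2) by simp
  have "p * (\<theta> / (1 + \<theta>)) * (n * (1 + \<theta>) / c) = (p * (n / c)) * (\<theta> / (1 + \<theta>) * (1 + \<theta>))"
    by (simp only: divide_inverse mult_ac)
  also have "\<dots> = \<theta>" using \<theta> n assms(1) by (simp add: p_def)
  finally have "\<theta> = p * (\<theta> / (1 + \<theta>)) * (n * (1 + \<theta>) / c)" ..
  also have "\<dots> \<le> \<kappa> * (n - r)"
  proof (rule mult_mono[OF rate])
    have "n * (1 + \<theta>) / c = n - (c - 1) / (2 * c) * n"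
      using assms(1) by (simp add: \<theta>_def field_simps)
    then show "n * (1 + \<theta>) / c \<le> n - r" using r by linarith
    show "0 \<le> \<kappa>" by fact
    show "0 \<le> n * (1 + \<theta>) / c" using \<theta> n assms(1) by simp
  qed
  finally show "\<theta> \<le> \<kappa> * (n - r)" .
qed

lemma prob_conn_bounded_below:
  assumes "1 < c"
  obtains k N where "0 < k"
    and "\<And>n u v. N \<le> n \<Longrightarrow> u < n \<Longrightarrow> v < n \<Longrightarrow> u \<noteq> v \<Longrightarrow>
           k \<le> bern_expect (c / real n) (edges n) (\<lambda>\<omega>. of_bool (conn (open_edges n \<omega>) u v))"
proof
  define \<theta> where "\<theta> = (c - 1) / 2"
  define \<delta> where "\<delta> = (c - 1) / (2 * c)"
  have "0 < \<theta>" "0 < \<delta>" using assms by (simp_all add: \<theta>_def \<delta>_def)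
  show "0 < \<delta> * (1 - exp (- \<theta>)) / 2" using \<open>0 < \<theta>\<close> \<open>0 < \<delta>\<close> by simp
  fix n u v
  assume n: "nat \<lceil>max 2 (max c (2 / \<delta>))\<rceil> \<le> n" and uv: "u < n" "v < n" "u \<noteq> v"
  then have "2 \<le> n" "c \<le> real n" "2 / \<delta> \<le> real n" by linarith+
  define \<kappa> where "\<kappa> = - ln (1 - c / n * (1 - exp (- \<theta>)))"
  note rate = exploration_rate[OF assms \<open>c \<le> real n\<close>, folded \<theta>_def, folded \<kappa>_def]
  have p: "0 \<le> c / real n" "c / real n \<le> 1" using assms \<open>c \<le> real n\<close> by simp_all
  let ?P = "bern_expect (c / real n) (edges n) (\<lambda>\<omega>. of_bool (conn (open_edges n \<omega>) u v))"
  have "bern_expect (c / real n) (edges n) (\<lambda>\<omega>. of_bool (real (card (component n \<omega> u)) < \<delta> * n))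
      \<le> exp (- \<theta>)"
    using uv(1) \<open>2 \<le> n\<close> p less_imp_le[OF \<open>0 < \<theta>\<close>] rate(1,2)
    by (rule prob_small_component_le) (use rate(3) in \<open>simp add: \<delta>_def\<close>)
  moreover have "2 \<le> \<delta> * n" using \<open>2 / \<delta> \<le> real n\<close> \<open>0 < \<delta>\<close> by (simp add: field_simps)
  ultimately have "(\<delta> * n - 1) * (1 - exp (- \<theta>)) \<le> (real n - 1) * ?P"
    using uv p by (intro prob_conn_ge) auto
  have "real n * (\<delta> * (1 - exp (- \<theta>)) / 2) = \<delta> * n / 2 * (1 - exp (- \<theta>))" by simp
  also have "\<dots> \<le> (\<delta> * n - 1) * (1 - exp (- \<theta>))"
    using \<open>2 \<le> \<delta> * n\<close> \<open>0 < \<theta>\<close> by (intro mult_right_mono) auto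
  also have "\<dots> \<le> (real n - 1) * ?P" by fact
  also have "\<dots> \<le> real n * ?P"
    using bern_expect_nonneg[OF p, of "edges n" "\<lambda>\<omega>. of_bool (conn (open_edges n \<omega>) u v)"]
    by (simp add: mult_right_mono)
  finally have "real n * (\<delta> * (1 - exp (- \<theta>)) / 2) \<le> real n * ?P" .
  then show "\<delta> * (1 - exp (- \<theta>)) / 2 \<le> ?P" using \<open>2 \<le> n\<close> by simp
qed

lemma route_time_ge:
  assumes lr: "local_router n u v alg" and "u \<noteq> v"
    and "conn (open_edges n \<omega>) u v" and "\<not> hits v (probes alg \<omega> K)"
  shows "K \<le> route_time alg u v \<omega>"
proof (rule ccontr)
  let ?T = "route_time alg u v \<omega>"
  assume "\<not> K \<le> ?T"
  obtain k where "conn (found_open (probes alg \<omega> k)) u v"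
    using lr assms(3) by (auto simp: local_router_def)
  then have "conn (found_open (probes alg \<omega> ?T)) u v" unfolding route_time_def by (rule LeastI)
  moreover have "found_open (probes alg \<omega> ?T) \<subseteq> found_open (probes alg \<omega> K)"
    using take_probes[of ?T K alg \<omega>] \<open>\<not> K \<le> ?T\<close>
    by (metis found_open_mono nat_le_linear set_take_subset)
  ultimately have "conn (found_open (probes alg \<omega> K)) u v" by (rule conn_mono[rotated])
  then have "hits v (probes alg \<omega> K)" using conn_cases \<open>u \<noteq> v\<close> by (fastforce simp: hits_def)
  with assms(4) show False ..
qed

lemma exp_routing_complexity_ge:
  assumes lr: "local_router n u v alg" and "u \<noteq> v" and p: "0 \<le> p" "p \<le> 1"
  defines "P \<equiv> bern_expect p (edges n) (\<lambda>\<omega>. of_bool (conn (open_edges n \<omega>) u v))"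
  assumes "0 < P" and "bern_expect p (edges n) (\<lambda>\<omega>. of_bool (hits v (probes alg \<omega> K))) \<le> P / 2"
  shows "real K / 2 \<le> exp_routing_complexity n p u v alg"
proof -
  let ?A = "\<lambda>\<omega>. of_bool (conn (open_edges n \<omega>) u v) :: real"
  let ?T = "bern_expect p (edges n) (\<lambda>\<omega>. real (route_time alg u v \<omega>) * ?A \<omega>)"
  have "real K * (P / 2)
      \<le> real K * (P - bern_expect p (edges n) (\<lambda>\<omega>. of_bool (hits v (probes alg \<omega> K))))"
    using assms(7) by (intro mult_left_mono) auto
  also have "\<dots> = bern_expect p (edges n) (\<lambda>\<omega>. real K * (?A \<omega> - of_bool (hits v (probes alg \<omega> K))))"
    by (simp add: P_def bern_expect_cmult bern_expect_diff)
  also have "\<dots> \<le> ?T"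
    using route_time_ge[OF lr \<open>u \<noteq> v\<close>] by (intro bern_expect_mono[OF p]) auto
  finally have "real K / 2 * P \<le> ?T" by simp
  moreover have "exp_routing_complexity n p u v alg = ?T / P"
  proof -
    let ?C = "{\<omega>. conn (open_edges n \<omega>) u v}"
    have "measure_pmf.prob (gnp n p) ?C = measure_pmf.expectation (gnp n p) (indicator ?C)" by simp
    also have "indicator ?C = (\<lambda>\<omega>. of_bool (conn (open_edges n \<omega>) u v) :: real)"
      by (auto simp: indicator_def)
    also have "measure_pmf.expectation (gnp n p) \<dots> = P"
      unfolding gnp_def P_def by (rule expectation_Pi_bernoulli[OF finite_edges p])
    finally show ?thesis
      unfolding exp_routing_complexity_def
      by (simp add: gnp_def expectation_Pi_bernoulli[OF finite_edges p] indicator_def)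
  qed
  ultimately show ?thesis using \<open>0 < P\<close> by (simp add: pos_le_divide_eq)
qed

lemma probe_budget:
  fixes c k n K :: real
  assumes "0 < c" "0 < k" "4 * c / k \<le> n" "K \<le> k / (8 * c\<^sup>2) * n\<^sup>2"
  shows "c / n * (1 + 2 * (c / n) * K) \<le> k / 2"
proof -
  have n: "0 < n" using assms(1-3) by (smt (verit) divide_pos_pos)
  have "c / n \<le> k / 4" using assms(2,3) n by (simp add: field_simps)
  moreover have "2 * (c / n)\<^sup>2 * K \<le> 2 * (c / n)\<^sup>2 * (k / (8 * c\<^sup>2) * n\<^sup>2)"
    using assms(4) by (intro mult_left_mono) auto
  moreover have "2 * (c / n)\<^sup>2 * (k / (8 * c\<^sup>2) * n\<^sup>2) = k / 4"
    using assms(1) n by (simp add: field_simps power2_eq_square)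
  ultimately show ?thesis by (simp add: algebra_simps power2_eq_square)
qed

lemma exp_routing_complexity_quadratic:
  fixes c k :: real
  assumes "1 < c" "0 < k" and lr: "local_router n u v alg" and "u \<noteq> v"
    and n: "c \<le> real n" "4 * c / k \<le> real n" "16 * c\<^sup>2 / k \<le> real n"
    and conn: "k \<le> bern_expect (c / real n) (edges n) (\<lambda>\<omega>. of_bool (conn (open_edges n \<omega>) u v))"
  shows "k / (32 * c\<^sup>2) * real n ^ 2 \<le> exp_routing_complexity n (c / real n) u v alg"
proof -
  define d where "d = k / (8 * c\<^sup>2)"
  have "0 < d" using assms(1,2) by (simp add: d_def)
  have p: "0 \<le> c / real n" "c / real n \<le> 1" using assms(1) n(1) by simp_all
  have "2 \<le> d * real n" using n(3) assms(1,2) by (simp add: d_def field_simps)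
  moreover have "d * real n \<le> d * real n ^ 2"
    using n(1) assms(1) \<open>0 < d\<close> by (simp add: power2_eq_square)
  ultimately have "2 \<le> d * real n ^ 2" by linarith
  define K where "K = nat \<lfloor>d * real n ^ 2\<rfloor>"
  have K: "real K \<le> d * real n ^ 2" "d * real n ^ 2 - 1 \<le> real K"
    using \<open>0 < d\<close> by (simp_all add: K_def)
  have "bern_expect (c / real n) (edges n) (\<lambda>\<omega>. of_bool (hits v (probes alg \<omega> K)))
      \<le> c / real n * (1 + 2 * (c / real n) * real K)"
    using lr \<open>u \<noteq> v\<close> p by (rule prob_hits_le)
  also have "\<dots> \<le> k / 2"
    using assms(1,2) n(2) K(1) by (intro probe_budget) (simp_all add: d_def)
  finally have "bern_expect (c / real n) (edges n) (\<lambda>\<omega>. of_bool (hits v (probes alg \<omega> K)))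
      \<le> bern_expect (c / real n) (edges n) (\<lambda>\<omega>. of_bool (conn (open_edges n \<omega>) u v)) / 2"
    using conn by linarith
  with conn \<open>0 < k\<close> have "real K / 2 \<le> exp_routing_complexity n (c / real n) u v alg"
    by (intro exp_routing_complexity_ge[OF lr \<open>u \<noteq> v\<close> p]) auto
  moreover have "k / (32 * c\<^sup>2) * real n ^ 2 = d * real n ^ 2 / 4" by (simp add: d_def)
  ultimately show ?thesis using \<open>2 \<le> d * real n ^ 2\<close> K(2) by linarith
qed

theorem mainTheorem8:
  fixes c :: real
  assumes "c > 1"
  shows "\<exists>C > 0. \<exists>N. \<forall>n \<ge> N. \<forall>u v alg.
           u < n \<and> v < n \<and> u \<noteq> v \<and> local_router n u v alg \<longrightarrow>
           exp_routing_complexity n (c / real n) u v alg \<ge> C * real n ^ 2"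
proof -
  obtain k N where "0 < k" and conn: "\<And>n u v. N \<le> n \<Longrightarrow> u < n \<Longrightarrow> v < n \<Longrightarrow> u \<noteq> v \<Longrightarrow>
      k \<le> bern_expect (c / real n) (edges n) (\<lambda>\<omega>. of_bool (conn (open_edges n \<omega>) u v))"
    using prob_conn_bounded_below[OF assms] by blast
  let ?N = "max N (nat \<lceil>max c (max (4 * c / k) (16 * c\<^sup>2 / k))\<rceil>)"
  show ?thesis
  proof (intro exI[of _ "k / (32 * c\<^sup>2)"] conjI exI[of _ ?N] allI impI)
    show "0 < k / (32 * c\<^sup>2)" using \<open>0 < k\<close> assms by simp
    fix n u v alg
    assume n: "?N \<le> n" and H: "u < n \<and> v < n \<and> u \<noteq> v \<and> local_router n u v alg"
    then have "c \<le> real n" "4 * c / k \<le> real n" "16 * c\<^sup>2 / k \<le> real n" by linarith+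
    with H n \<open>0 < k\<close>
    show "k / (32 * c\<^sup>2) * real n ^ 2 \<le> exp_routing_complexity n (c / real n) u v alg"
      by (intro exp_routing_complexity_quadratic[OF assms]) (auto intro: conn)
  qed
qed

end
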